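(* Let $R$ be a P$v$MD, $x$ a nonzero element of $R$, $P$ a prime ideal minimal over $xR$, and $I=xR_P\cap R$. Then (1) $I$ is a $w$-ideal of $R$ (i.e. $I_w=I$); (2) $xR+I^2$ is a $w$-reduction of $I$; (3) if $I$ is $w$-basic, then $P$ is a maximal $t$-ideal of $R$.
   Context: For a domain $R$ with quotient field $K$ and nonzero fractional ideal $I$: $I^{-1}=(R:I)=\{x\in K:xI\subseteq R\}$, $I_v=(I^{-1})^{-1}$, $I_t=\bigcup J_v$ over finitely generated subideals $J\subseteq I$; a maximal $t$-ideal is an ideal maximal among proper integral ideals $Q$ with $Q_t=Q$. The $w$-operation is $I_w=\bigcup(I:J)$ over finitely generated ideals $J$ with $J_v=R$ (equivalently $I_w=\bigcap_M IR_M$ over maximal $t$-ideals $M$). $R$ is a P$v$MD if every nonzero finitely generated ideal $I$ satisfies $(II^{-1})_t=R$ (equivalently $R_M$ is a valuation domain for each maximal $t$-ideal $M$). For a nonzero ideal $I$, an ideal $J\subseteq I$ is a $w$-reduction of $I$ if $(JI^n)_w=(I^{n+1})_w$ for some integer $n\ge0$; $I$ is $w$-basic if every $w$-reduction $J$ of $I$ satisfies $J_w=I_w$. *)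

theory Defs
  imports "HOL-Computational_Algebra.Fraction_Field"
begin

text \<open>The domain R is the whole type 'a (an integral domain, class idom);
its quotient field K is 'a fract. All (fractional) ideals are subsets of K;
integral ideals are subsets of the image Rs of R in K.\<close>

definition emb :: "'a::idom \<Rightarrow> 'a fract" where
  "emb a = Fract a 1"

definition Rs :: "'a::idom fract set" where
  "Rs = range emb"

definition integral_ideal :: "'a::idom fract set \<Rightarrow> bool" where
  "integral_ideal Q \<longleftrightarrow> Q \<subseteq> Rs \<and> 0 \<in> Q \<and> (\<forall>a\<in>Q. \<forall>b\<in>Q. a + b \<in> Q)
      \<and> (\<forall>r\<in>Rs. \<forall>a\<in>Q. r * a \<in> Q)"

definition prime_ideal :: "'a::idom fract set \<Rightarrow> bool" where
  "prime_ideal P \<longleftrightarrow> integral_ideal P \<and> P \<noteq> Rs \<and>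
      (\<forall>a\<in>Rs. \<forall>b\<in>Rs. a * b \<in> P \<longrightarrow> a \<in> P \<or> b \<in> P)"

definition pideal :: "'a::idom \<Rightarrow> 'a fract set" where
  "pideal x = (\<lambda>r. emb x * r) ` Rs"

definition minimal_prime_over :: "'a::idom fract set \<Rightarrow> 'a fract set \<Rightarrow> bool" where
  "minimal_prime_over P A \<longleftrightarrow> prime_ideal P \<and> A \<subseteq> P \<and>
      (\<forall>Q. prime_ideal Q \<and> A \<subseteq> Q \<and> Q \<subseteq> P \<longrightarrow> Q = P)"

definition localization :: "'a::idom fract set \<Rightarrow> 'a fract set" where
  "localization P = {a / s | a s. a \<in> Rs \<and> s \<in> Rs \<and> s \<notin> P}"

definition iprod :: "'a::idom fract set \<Rightarrow> 'a fract set \<Rightarrow> 'a fract set" where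
  "iprod A B = {\<Sum>i<n. a i * b i | (n::nat) a b. \<forall>i<n. a i \<in> A \<and> b i \<in> B}"

definition iadd :: "'a::idom fract set \<Rightarrow> 'a fract set \<Rightarrow> 'a fract set" where
  "iadd A B = {a + b | a b. a \<in> A \<and> b \<in> B}"

fun ipow :: "'a::idom fract set \<Rightarrow> nat \<Rightarrow> 'a fract set" where
  "ipow I 0 = Rs"
| "ipow I (Suc n) = iprod I (ipow I n)"

definition fgen :: "'a::idom fract set \<Rightarrow> 'a fract set" where
  "fgen F = {\<Sum>f\<in>F. r f * f | r. \<forall>f\<in>F. r f \<in> Rs}"

definition colon :: "'a::idom fract set \<Rightarrow> 'a fract set \<Rightarrow> 'a fract set" where
  "colon A B = {x. \<forall>b\<in>B. x * b \<in> A}"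

definition finv :: "'a::idom fract set \<Rightarrow> 'a fract set" where
  "finv I = colon Rs I"

definition vop :: "'a::idom fract set \<Rightarrow> 'a fract set" where
  "vop I = finv (finv I)"

definition tclos :: "'a::idom fract set \<Rightarrow> 'a fract set" where
  "tclos I = \<Union> {vop (fgen F) | F. finite F \<and> F \<subseteq> I}"

definition wop :: "'a::idom fract set \<Rightarrow> 'a fract set" where
  "wop I = \<Union> {colon I (fgen F) | F. finite F \<and> F \<subseteq> Rs \<and> vop (fgen F) = Rs}"

definition max_t_ideal :: "'a::idom fract set \<Rightarrow> bool" where
  "max_t_ideal Q \<longleftrightarrow> integral_ideal Q \<and> Q \<noteq> Rs \<and> tclos Q = Q \<and>
     (\<forall>Q'. integral_ideal Q' \<and> Q' \<noteq> Rs \<and> tclos Q' = Q' \<and> Q \<subseteq> Q' \<longrightarrow> Q' = Q)"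

definition PvMD :: "'a::idom itself \<Rightarrow> bool" where
  "PvMD _ \<longleftrightarrow> (\<forall>F::'a fract set. finite F \<and> F \<subseteq> Rs \<and> fgen F \<noteq> {0} \<longrightarrow>
      tclos (iprod (fgen F) (finv (fgen F))) = Rs)"

definition w_reduction :: "'a::idom fract set \<Rightarrow> 'a fract set \<Rightarrow> bool" where
  "w_reduction J I \<longleftrightarrow> integral_ideal J \<and> J \<subseteq> I \<and>
      (\<exists>n. wop (iprod J (ipow I n)) = wop (ipow I (Suc n)))"

definition w_basic :: "'a::idom fract set \<Rightarrow> bool" where
  "w_basic I \<longleftrightarrow> (\<forall>J. w_reduction J I \<longrightarrow> wop J = wop I)"

end

(*
  Minimality of P over xR means that every p \<in> P satisfies s p^n \<in> xR for some s \<notin> P.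
  This survives passage to the v-closure of a finitely generated subideal of P (induct on the
  number of generators outside xR), so P is a t-ideal and I = xR_P \<inter> R equals its own
  w-closure.

  The w-operation is local: A_w is the intersection of the A R_M over the prime t-ideals M.
  In a PvMD each R_M is a valuation domain, so for M \<supseteq> P one gets I^2 R_M = x I R_M, and
  for M \<not>\<supseteq> P some power of an element of P - M already lies in I; either way
  I^2 \<subseteq> (J I)_w for J = xR + I^2. If I is w-basic then I = J_w \<subseteq> x R_M for every
  prime t-ideal M \<supseteq> P, which rules out a t-ideal strictly above P.
*)

theory Submission
  imports Defs "HOL-Library.Set_Algebras"
begin

section \<open>Submodules of the quotient field\<close>

lemma Rs_0 [simp]: "0 \<in> Rs"
  unfolding Rs_def emb_def by (rule range_eqI[of _ _ 0]) (simp add: Zero_fract_def)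

lemma Rs_1 [simp]: "1 \<in> Rs"
  unfolding Rs_def emb_def by (rule range_eqI[of _ _ 1]) (simp add: One_fract_def)

lemma emb_Rs [simp]: "emb a \<in> Rs"
  unfolding Rs_def by simp

lemma emb_eq_0_iff [simp]: "emb a = 0 \<longleftrightarrow> a = 0"
  unfolding emb_def by (simp add: Zero_fract_def eq_fract)

lemma emb_add: "emb (a + b) = emb a + emb b"
  unfolding emb_def by simp

lemma emb_mult: "emb (a * b) = emb a * emb b"
  unfolding emb_def by simp

lemma Rs_add [intro]: "a \<in> Rs \<Longrightarrow> b \<in> Rs \<Longrightarrow> a + b \<in> Rs"
  unfolding Rs_def by (auto simp: emb_add[symmetric])

lemma Rs_mult [intro]: "a \<in> Rs \<Longrightarrow> b \<in> Rs \<Longrightarrow> a * b \<in> Rs"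
  unfolding Rs_def by (auto simp: emb_mult[symmetric])

lemma Rs_power [intro]: "a \<in> Rs \<Longrightarrow> a ^ n \<in> Rs"
  by (induct n) auto

definition submodule :: "'a::idom fract set \<Rightarrow> bool" where
  "submodule S \<longleftrightarrow> 0 \<in> S \<and> (\<forall>a\<in>S. \<forall>b\<in>S. a + b \<in> S) \<and> (\<forall>r\<in>Rs. \<forall>a\<in>S. r * a \<in> S)"

lemma submoduleI:
  "0 \<in> S \<Longrightarrow> (\<And>a b. a \<in> S \<Longrightarrow> b \<in> S \<Longrightarrow> a + b \<in> S)
    \<Longrightarrow> (\<And>r a. r \<in> Rs \<Longrightarrow> a \<in> S \<Longrightarrow> r * a \<in> S) \<Longrightarrow> submodule S"
  unfolding submodule_def by blast

lemma submodule_0: "submodule S \<Longrightarrow> 0 \<in> S"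
  unfolding submodule_def by blast

lemma submodule_add: "submodule S \<Longrightarrow> a \<in> S \<Longrightarrow> b \<in> S \<Longrightarrow> a + b \<in> S"
  unfolding submodule_def by blast

lemma submodule_mult_left: "submodule S \<Longrightarrow> r \<in> Rs \<Longrightarrow> a \<in> S \<Longrightarrow> r * a \<in> S"
  unfolding submodule_def by blast

lemma submodule_mult_right: "submodule S \<Longrightarrow> r \<in> Rs \<Longrightarrow> a \<in> S \<Longrightarrow> a * r \<in> S"
  using submodule_mult_left[of S r a] by (simp add: mult.commute)

lemma submodule_sum: "submodule S \<Longrightarrow> (\<And>i. i \<in> A \<Longrightarrow> f i \<in> S) \<Longrightarrow> sum f A \<in> S"
  by (induct A rule: infinite_finite_induct) (auto intro: submodule_0 submodule_add)

lemma submodule_Rs [simp]: "submodule Rs"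
  by (rule submoduleI) auto

lemma integral_ideal_iff_submodule: "integral_ideal Q \<longleftrightarrow> Q \<subseteq> Rs \<and> submodule Q"
  unfolding integral_ideal_def submodule_def by blast

lemma integral_ideal_one_notin:
  assumes "integral_ideal Q" "Q \<noteq> Rs"
  shows "1 \<notin> Q"
proof
  assume "1 \<in> Q"
  then have "Rs \<subseteq> Q"
    using assms(1) submodule_mult_right[of Q _ 1] unfolding integral_ideal_iff_submodule by fastforce
  then show False using assms unfolding integral_ideal_iff_submodule by blast
qed

lemma submodule_colon: "submodule S \<Longrightarrow> submodule (colon S X)"
  unfolding colon_def
  by (rule submoduleI) (auto simp: distrib_right mult.assoc intro: submodule_0 submodule_add submodule_mult_left)

lemma submodule_fgen: "submodule (fgen F)"
proof (rule submoduleI)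
  show "0 \<in> fgen F"
    unfolding fgen_def by (rule CollectI, rule exI[of _ "\<lambda>_. 0"]) simp
next
  fix a b assume "a \<in> fgen F" "b \<in> fgen F"
  then obtain r r' where "a = (\<Sum>f\<in>F. r f * f)" "b = (\<Sum>f\<in>F. r' f * f)"
    and "\<forall>f\<in>F. r f \<in> Rs" "\<forall>f\<in>F. r' f \<in> Rs"
    unfolding fgen_def by blast
  then show "a + b \<in> fgen F"
    unfolding fgen_def
    by (intro CollectI exI[of _ "\<lambda>f. r f + r' f"]) (auto simp: sum.distrib distrib_right)
next
  fix c a :: "'a fract" assume "c \<in> Rs" "a \<in> fgen F"
  then obtain r where "a = (\<Sum>f\<in>F. r f * f)" "\<forall>f\<in>F. r f \<in> Rs"
    unfolding fgen_def by blast
  with \<open>c \<in> Rs\<close> show "c * a \<in> fgen F"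
    unfolding fgen_def
    by (intro CollectI exI[of _ "\<lambda>f. c * r f"]) (auto simp: sum_distrib_left mult.assoc)
qed

lemma fgen_superset: "finite F \<Longrightarrow> F \<subseteq> fgen F"
proof
  fix g assume "finite F" "g \<in> F"
  have "(\<Sum>f\<in>F. (if f = g then 1 else 0) * f) = (\<Sum>f\<in>F. if f = g then f else 0)"
    by (rule sum.cong) auto
  with \<open>finite F\<close> \<open>g \<in> F\<close> have "(\<Sum>f\<in>F. (if f = g then 1 else 0) * f) = g"
    by simp
  then show "g \<in> fgen F"
    unfolding fgen_def by (intro CollectI exI[of _ "\<lambda>f. if f = g then 1 else 0"]) auto
qed

lemma fgen_least: "submodule S \<Longrightarrow> F \<subseteq> S \<Longrightarrow> fgen F \<subseteq> S"
  unfolding fgen_def by (auto intro!: submodule_sum submodule_mult_left)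

section \<open>The \<open>v\<close>- and \<open>t\<close>-closures of finitely generated ideals\<close>

lemma mem_finv_fgen_iff: "finite F \<Longrightarrow> c \<in> finv (fgen F) \<longleftrightarrow> (\<forall>f\<in>F. c * f \<in> Rs)"
proof
  assume "finite F" "c \<in> finv (fgen F)"
  then show "\<forall>f\<in>F. c * f \<in> Rs"
    using fgen_superset unfolding finv_def colon_def by blast
next
  assume "\<forall>f\<in>F. c * f \<in> Rs"
  moreover have "submodule {z. c * z \<in> Rs}"
    by (rule submoduleI) (auto simp: distrib_left mult.left_commute)
  ultimately have "fgen F \<subseteq> {z. c * z \<in> Rs}"
    by (intro fgen_least) auto
  then show "c \<in> finv (fgen F)"
    unfolding finv_def colon_def by auto
qed

lemma mem_vop_fgen_iff:
  assumes "finite F"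
  shows "y \<in> vop (fgen F) \<longleftrightarrow> (\<forall>c. (\<forall>f\<in>F. c * f \<in> Rs) \<longrightarrow> c * y \<in> Rs)"
proof -
  have "y \<in> vop (fgen F) \<longleftrightarrow> (\<forall>c\<in>finv (fgen F). y * c \<in> Rs)"
    unfolding vop_def by (simp add: finv_def[of "finv _"] colon_def)
  also have "\<dots> \<longleftrightarrow> (\<forall>c. (\<forall>f\<in>F. c * f \<in> Rs) \<longrightarrow> c * y \<in> Rs)"
    by (auto simp: mem_finv_fgen_iff[OF assms] mult.commute)
  finally show ?thesis .
qed

lemma submodule_vop: "submodule (vop A)"
  unfolding vop_def finv_def[of "finv _"] by (rule submodule_colon) simp

lemma vop_fgen_superset: "finite A \<Longrightarrow> A \<subseteq> vop (fgen A)"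
  by (auto simp: mem_vop_fgen_iff)

lemma vop_fgen_subset_Rs:
  assumes "finite A" "A \<subseteq> Rs"
  shows "vop (fgen A) \<subseteq> Rs"
proof
  fix y assume "y \<in> vop (fgen A)"
  then have "(\<forall>f\<in>A. 1 * f \<in> Rs) \<longrightarrow> 1 * y \<in> Rs"
    unfolding mem_vop_fgen_iff[OF assms(1)] by (rule spec)
  with assms(2) show "y \<in> Rs" by auto
qed

lemma vop_fgen_eq_Rs:
  assumes "finite A" "A \<subseteq> Rs" "1 \<in> vop (fgen A)"
  shows "vop (fgen A) = Rs"
proof
  show "vop (fgen A) \<subseteq> Rs" using assms(1,2) by (rule vop_fgen_subset_Rs)
  show "Rs \<subseteq> vop (fgen A)"
    using submodule_mult_right[OF submodule_vop _ assms(3)] by auto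
qed

lemma vop_fgen_times:
  assumes A: "finite A" and B: "finite B" and y: "y \<in> vop (fgen A)" and z: "z \<in> vop (fgen B)"
  shows "y * z \<in> vop (fgen (A * B))"
  unfolding mem_vop_fgen_iff[OF finite_set_times[OF A B]]
proof (intro allI impI)
  fix c assume c: "\<forall>f\<in>A * B. c * f \<in> Rs"
  have "\<forall>a\<in>A. (c * z) * a \<in> Rs"
  proof
    fix a assume "a \<in> A"
    with c have "\<forall>b\<in>B. (c * a) * b \<in> Rs"
      by (auto simp: mult.assoc)
    with z B have "(c * a) * z \<in> Rs"
      unfolding mem_vop_fgen_iff[OF B] by blast
    then show "(c * z) * a \<in> Rs" by (simp add: ac_simps)
  qed
  with y A have "(c * z) * y \<in> Rs"
    unfolding mem_vop_fgen_iff[OF A] by blast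
  then show "c * (y * z) \<in> Rs" by (simp add: ac_simps)
qed

lemma vop_fgen_mono:
  assumes A: "finite A" and B: "finite B" and AB: "A \<subseteq> fgen B"
  shows "vop (fgen A) \<subseteq> vop (fgen B)"
proof
  fix y assume y: "y \<in> vop (fgen A)"
  show "y \<in> vop (fgen B)"
    unfolding mem_vop_fgen_iff[OF B]
  proof (intro allI impI)
    fix c assume "\<forall>f\<in>B. c * f \<in> Rs"
    then have "\<forall>f\<in>A. c * f \<in> Rs"
      using AB mem_finv_fgen_iff[OF B] unfolding finv_def colon_def by blast
    with y A show "c * y \<in> Rs"
      unfolding mem_vop_fgen_iff[OF A] by blast
  qed
qed

lemma vop_fgen_scale:
  assumes A: "finite A" and y: "y \<in> vop (fgen A)"
  shows "s * y \<in> vop (fgen ((*) s ` A))"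
  unfolding mem_vop_fgen_iff[OF finite_imageI[OF A]]
proof (intro allI impI)
  fix c assume "\<forall>f\<in>(*) s ` A. c * f \<in> Rs"
  then have "\<forall>f\<in>A. (c * s) * f \<in> Rs" by (simp add: mult.assoc)
  with y A have "(c * s) * y \<in> Rs"
    unfolding mem_vop_fgen_iff[OF A] by blast
  then show "c * (s * y) \<in> Rs" by (simp add: mult.assoc)
qed

text \<open>In \<open>(g, G)\<^sup>m\<close> every product of generators other than \<open>g\<^sup>m\<close> has a factor in \<open>G\<close>.\<close>

lemma vop_fgen_insert_power:
  assumes G: "finite G" "G \<subseteq> Rs" and g: "g \<in> Rs" and y: "y \<in> vop (fgen (insert g G))"
  shows "y ^ Suc m \<in> vop (fgen (insert (g ^ Suc m) G))"
proof (induct m)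
  case 0
  then show ?case using y by simp
next
  case (Suc m)
  let ?H = "insert (g ^ Suc (Suc m)) G"
  have "y * y ^ Suc m \<in> vop (fgen (insert g G * insert (g ^ Suc m) G))"
    using G y Suc by (intro vop_fgen_times) auto
  moreover have "insert g G * insert (g ^ Suc m) G \<subseteq> fgen ?H"
  proof
    fix e assume "e \<in> insert g G * insert (g ^ Suc m) G"
    then obtain u v where uv: "e = u * v" "u \<in> insert g G" "v \<in> insert (g ^ Suc m) G"
      by (rule set_times_elim)
    have H: "?H \<subseteq> fgen ?H" using G by (intro fgen_superset) simp
    have "u \<in> Rs" "v \<in> Rs" using uv G g by auto
    consider "v \<in> G" | "u \<in> G" | "e = g ^ Suc (Suc m)"
      using uv by auto
    then show "e \<in> fgen ?H"
    proof cases
      case 1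
      then show ?thesis
        using H uv(1) \<open>u \<in> Rs\<close> submodule_mult_left[OF submodule_fgen] by blast
    next
      case 2
      then show ?thesis
        using H uv(1) \<open>v \<in> Rs\<close> submodule_mult_right[OF submodule_fgen] by blast
    qed (use H in blast)
  qed
  then have "vop (fgen (insert g G * insert (g ^ Suc m) G)) \<subseteq> vop (fgen ?H)"
    using G by (intro vop_fgen_mono finite_set_times) auto
  ultimately show ?case
    by (simp only: power_Suc[of y "Suc m"]) blast
qed

lemma mem_tclos_iff: "y \<in> tclos X \<longleftrightarrow> (\<exists>F. finite F \<and> F \<subseteq> X \<and> y \<in> vop (fgen F))"
  unfolding tclos_def by blast

lemma tclos_mono: "X \<subseteq> Y \<Longrightarrow> tclos X \<subseteq> tclos Y"
  unfolding subset_iff mem_tclos_iff by blast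

lemma tclos_superset: "X \<subseteq> tclos X"
proof
  fix y assume "y \<in> X"
  then show "y \<in> tclos X"
    unfolding mem_tclos_iff using vop_fgen_superset[of "{y}"] by blast
qed

section \<open>Prime \<open>t\<close>-ideals\<close>

definition t_proper :: "'a::idom fract set \<Rightarrow> bool" where
  "t_proper Q \<longleftrightarrow> integral_ideal Q \<and> 1 \<notin> tclos Q"

lemma t_proper_not_subset:
  assumes "t_proper Q" "finite G" "1 \<in> vop (fgen G)"
  shows "\<not> G \<subseteq> Q"
  using assms unfolding t_proper_def mem_tclos_iff by blast

lemma integral_ideal_Union_chain:
  assumes ch: "chain\<^sub>\<subseteq> C" and ne: "C \<noteq> {}" and ideals: "\<forall>Q\<in>C. integral_ideal Q"
  shows "integral_ideal (\<Union>C)"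
  unfolding integral_ideal_iff_submodule
proof
  have sub: "submodule Q" if "Q \<in> C" for Q
    using ideals that unfolding integral_ideal_iff_submodule by blast
  show "\<Union>C \<subseteq> Rs"
    using ideals unfolding integral_ideal_iff_submodule by blast
  show "submodule (\<Union>C)"
  proof (rule submoduleI)
    obtain Q where "Q \<in> C" using ne by blast
    then show "0 \<in> \<Union>C" using submodule_0[OF sub] by blast
  next
    fix a b assume "a \<in> \<Union>C" "b \<in> \<Union>C"
    then obtain Q where Q: "Q \<in> C" "{a, b} \<subseteq> Q"
      using finite_subset_Union_chain[of "{a, b}" C UNIV] ch ne
      unfolding chain_subset_alt_def by auto
    then have "a + b \<in> Q" using submodule_add[OF sub[OF Q(1)]] by simp
    then show "a + b \<in> \<Union>C" using Q(1) by blast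
  next
    fix r a :: "'a fract" assume r: "r \<in> Rs" and "a \<in> \<Union>C"
    then obtain Q where Q: "Q \<in> C" "a \<in> Q" by blast
    then have "r * a \<in> Q" using submodule_mult_left[OF sub[OF Q(1)] r] by blast
    then show "r * a \<in> \<Union>C" using Q(1) by blast
  qed
qed

lemma integral_ideal_Zorn:
  assumes D: "integral_ideal D" "\<Phi> D"
    and chains: "\<And>C. C \<noteq> {} \<Longrightarrow> chain\<^sub>\<subseteq> C \<Longrightarrow> \<forall>Q\<in>C. integral_ideal Q \<and> \<Phi> Q \<Longrightarrow> \<Phi> (\<Union>C)"
  obtains M where "D \<subseteq> M" "integral_ideal M" "\<Phi> M"
    "\<And>Q. integral_ideal Q \<Longrightarrow> \<Phi> Q \<Longrightarrow> M \<subseteq> Q \<Longrightarrow> Q = M"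
proof -
  define \<A> where "\<A> = {Q. integral_ideal Q \<and> \<Phi> Q \<and> D \<subseteq> Q}"
  have "\<exists>U\<in>\<A>. \<forall>X\<in>C. X \<subseteq> U" if C: "C \<in> chains \<A>" for C
  proof (cases "C = {}")
    case True
    have "D \<in> \<A>" using D unfolding \<A>_def by simp
    then show ?thesis using True by blast
  next
    case False
    have ch: "chain\<^sub>\<subseteq> C" and sub: "C \<subseteq> \<A>" using C unfolding chains_def by auto
    then have all: "\<forall>Q\<in>C. integral_ideal Q \<and> \<Phi> Q" unfolding \<A>_def by blast
    obtain Q where "Q \<in> C" using False by blast
    then have "D \<subseteq> \<Union>C" using sub unfolding \<A>_def by blast
    with integral_ideal_Union_chain[OF ch False] chains[OF False ch all] all
    have "\<Union>C \<in> \<A>" unfolding \<A>_def by blast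
    then show ?thesis by blast
  qed
  then obtain M where M: "M \<in> \<A>" and maximal: "\<forall>X\<in>\<A>. M \<subseteq> X \<longrightarrow> X = M"
    using Zorn_Lemma2[of \<A>] by blast
  show thesis
  proof (rule that)
    show "D \<subseteq> M" "integral_ideal M" "\<Phi> M" using M unfolding \<A>_def by auto
    fix Q assume "integral_ideal Q" "\<Phi> Q" "M \<subseteq> Q"
    then show "Q = M" using maximal \<open>D \<subseteq> M\<close> unfolding \<A>_def by blast
  qed
qed

definition adjoin :: "'a::idom fract set \<Rightarrow> 'a fract \<Rightarrow> 'a fract set" where
  "adjoin M a = {q + r * a | q r. q \<in> M \<and> r \<in> Rs}"

lemma subset_adjoin: "M \<subseteq> adjoin M a"
proof
  fix q assume "q \<in> M"
  then have "q + 0 * a \<in> adjoin M a" unfolding adjoin_def using Rs_0 by blast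
  then show "q \<in> adjoin M a" by simp
qed

lemma mem_adjoin: "0 \<in> M \<Longrightarrow> a \<in> adjoin M a"
  unfolding adjoin_def using Rs_1 by force

lemma integral_ideal_adjoin:
  assumes M: "integral_ideal M" and a: "a \<in> Rs"
  shows "integral_ideal (adjoin M a)"
  unfolding integral_ideal_iff_submodule
proof
  have MR: "M \<subseteq> Rs" and Mm: "submodule M"
    using M unfolding integral_ideal_iff_submodule by auto
  show "adjoin M a \<subseteq> Rs" unfolding adjoin_def using MR a by auto
  show "submodule (adjoin M a)"
  proof (rule submoduleI)
    show "0 \<in> adjoin M a" using subset_adjoin submodule_0[OF Mm] by blast
  next
    fix u v assume "u \<in> adjoin M a" "v \<in> adjoin M a"
    then obtain q r q' r' where "u = q + r * a" "v = q' + r' * a"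
      and "q \<in> M" "r \<in> Rs" "q' \<in> M" "r' \<in> Rs"
      unfolding adjoin_def by blast
    moreover have "u + v = (q + q') + (r + r') * a"
      using calculation by (simp add: algebra_simps)
    ultimately show "u + v \<in> adjoin M a"
      unfolding adjoin_def using submodule_add[OF Mm] by blast
  next
    fix c u :: "'a fract" assume c: "c \<in> Rs" and "u \<in> adjoin M a"
    then obtain q r where "u = q + r * a" "q \<in> M" "r \<in> Rs"
      unfolding adjoin_def by blast
    moreover have "c * u = c * q + (c * r) * a"
      using calculation by (simp add: algebra_simps)
    ultimately show "c * u \<in> adjoin M a"
      unfolding adjoin_def using submodule_mult_left[OF Mm c] c by blast
  qed
qed

lemma adjoin_mult_mem:
  assumes M: "integral_ideal M" and a: "a \<in> Rs" and b: "b \<in> Rs" and ab: "a * b \<in> M"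
    and u: "u \<in> adjoin M a" and v: "v \<in> adjoin M b"
  shows "u * v \<in> M"
proof -
  have Mm: "submodule M" using M unfolding integral_ideal_iff_submodule by auto
  obtain q1 r1 where 1: "u = q1 + r1 * a" "q1 \<in> M" "r1 \<in> Rs"
    using u unfolding adjoin_def by blast
  obtain q2 r2 where 2: "v = q2 + r2 * b" "q2 \<in> M" "r2 \<in> Rs"
    using v unfolding adjoin_def by blast
  have "v \<in> Rs"
    using integral_ideal_adjoin[OF M b] v unfolding integral_ideal_iff_submodule by blast
  have "u * v = q1 * v + (r1 * q2) * a + (r1 * r2) * (a * b)"
    using 1(1) 2(1) by (simp add: algebra_simps)
  moreover have "q1 * v \<in> M" using submodule_mult_right[OF Mm \<open>v \<in> Rs\<close> 1(2)] .
  moreover have "(r1 * q2) * a \<in> M"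
    using submodule_mult_right[OF Mm a] submodule_mult_left[OF Mm 1(3) 2(2)] by blast
  moreover have "(r1 * r2) * (a * b) \<in> M"
    using submodule_mult_left[OF Mm _ ab] 1(3) 2(3) by blast
  ultimately show ?thesis using submodule_add[OF Mm] by simp
qed

lemma prime_ideal_integral_ideal: "prime_ideal P \<Longrightarrow> integral_ideal P"
  unfolding prime_ideal_def by blast

lemma prime_ideal_submodule: "prime_ideal P \<Longrightarrow> submodule P"
  unfolding prime_ideal_def integral_ideal_iff_submodule by blast

lemma prime_ideal_subset_Rs: "prime_ideal P \<Longrightarrow> P \<subseteq> Rs"
  unfolding prime_ideal_def integral_ideal_iff_submodule by blast

lemma prime_ideal_one_notin: "prime_ideal P \<Longrightarrow> 1 \<notin> P"
  unfolding prime_ideal_def using integral_ideal_one_notin by blast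

lemma prime_ideal_nonzero: "prime_ideal P \<Longrightarrow> s \<notin> P \<Longrightarrow> s \<noteq> 0"
  using submodule_0[OF prime_ideal_submodule] by blast

lemma prime_idealD: "prime_ideal P \<Longrightarrow> a \<in> Rs \<Longrightarrow> b \<in> Rs \<Longrightarrow> a * b \<in> P \<Longrightarrow> a \<in> P \<or> b \<in> P"
  unfolding prime_ideal_def by blast

lemma prime_ideal_mult_notin:
  "prime_ideal P \<Longrightarrow> a \<in> Rs \<Longrightarrow> b \<in> Rs \<Longrightarrow> a \<notin> P \<Longrightarrow> b \<notin> P \<Longrightarrow> a * b \<notin> P"
  using prime_idealD by blast

lemma prime_ideal_power_notin: "prime_ideal P \<Longrightarrow> a \<in> Rs \<Longrightarrow> a \<notin> P \<Longrightarrow> a ^ n \<notin> P"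
  by (induct n) (auto simp: prime_ideal_one_notin dest: prime_ideal_mult_notin)

lemma prime_ideal_if_maximal_disjoint:
  assumes S: "\<And>s t. s \<in> S \<Longrightarrow> t \<in> S \<Longrightarrow> s * t \<in> S" "1 \<in> S"
    and M: "integral_ideal M" "M \<inter> S = {}"
    and maximal: "\<And>Q. integral_ideal Q \<Longrightarrow> Q \<inter> S = {} \<Longrightarrow> M \<subseteq> Q \<Longrightarrow> Q = M"
  shows "prime_ideal M"
proof -
  have meets: "\<exists>s\<in>S. s \<in> adjoin M a" if "a \<in> Rs" "a \<notin> M" for a
  proof (rule ccontr)
    assume "\<not> ?thesis"
    then have "adjoin M a \<inter> S = {}" by blast
    then have "adjoin M a = M"
      by (rule maximal[OF integral_ideal_adjoin[OF M(1) that(1)] _ subset_adjoin])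
    moreover have "0 \<in> M" using M(1) unfolding integral_ideal_def by blast
    ultimately show False using mem_adjoin[of M a] that(2) by blast
  qed
  have "a \<in> M \<or> b \<in> M" if ab: "a \<in> Rs" "b \<in> Rs" "a * b \<in> M" for a b
  proof (rule ccontr)
    assume "\<not> (a \<in> M \<or> b \<in> M)"
    then obtain s t where "s \<in> S" "s \<in> adjoin M a" "t \<in> S" "t \<in> adjoin M b"
      using meets ab(1,2) by meson
    then have "s * t \<in> M" "s * t \<in> S"
      using adjoin_mult_mem[OF M(1) ab] S(1) by auto
    then show False using M(2) by blast
  qed
  moreover have "M \<noteq> Rs" using S(2) M(2) Rs_1 by blast
  ultimately show ?thesis unfolding prime_ideal_def using M(1) by blast
qed

lemma prime_ideal_if_maximal_t_proper:
  assumes M: "t_proper M" and maximal: "\<And>Q. t_proper Q \<Longrightarrow> M \<subseteq> Q \<Longrightarrow> Q = M"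
  shows "prime_ideal M"
proof -
  have ideal: "integral_ideal M" and one: "1 \<notin> tclos M"
    using M unfolding t_proper_def by auto
  have escape: "\<exists>F. finite F \<and> F \<subseteq> adjoin M a \<and> 1 \<in> vop (fgen F)"
    if a: "a \<in> Rs" "a \<notin> M" for a
  proof -
    have "0 \<in> M" using ideal unfolding integral_ideal_def by blast
    then have "adjoin M a \<noteq> M" using mem_adjoin[of M a] a(2) by blast
    then have "\<not> t_proper (adjoin M a)" using maximal subset_adjoin by blast
    then show ?thesis
      using integral_ideal_adjoin[OF ideal a(1)] unfolding t_proper_def mem_tclos_iff by blast
  qed
  have "a \<in> M \<or> b \<in> M" if ab: "a \<in> Rs" "b \<in> Rs" "a * b \<in> M" for a b
  proof (rule ccontr)
    assume "\<not> (a \<in> M \<or> b \<in> M)"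
    then obtain F G where F: "finite F" "F \<subseteq> adjoin M a" "1 \<in> vop (fgen F)"
      and G: "finite G" "G \<subseteq> adjoin M b" "1 \<in> vop (fgen G)"
      using escape ab by meson
    have "1 \<in> vop (fgen (F * G))" using vop_fgen_times[OF F(1) G(1) F(3) G(3)] by simp
    moreover have "F * G \<subseteq> M"
    proof
      fix e assume "e \<in> F * G"
      then obtain u v where "e = u * v" "u \<in> F" "v \<in> G" by (rule set_times_elim)
      then show "e \<in> M" using F(2) G(2) adjoin_mult_mem[OF ideal ab] by blast
    qed
    ultimately have "1 \<in> tclos M"
      unfolding mem_tclos_iff using finite_set_times[OF F(1) G(1)] by blast
    then show False using one by blast
  qed
  moreover have "M \<noteq> Rs" using one tclos_superset Rs_1 by blast
  ultimately show ?thesis unfolding prime_ideal_def using ideal by blast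
qed

lemma t_proper_extend_prime:
  assumes "t_proper D"
  obtains M where "D \<subseteq> M" "t_proper M" "prime_ideal M"
proof -
  have "1 \<notin> tclos (\<Union>C)"
    if ne: "C \<noteq> {}" and ch: "chain\<^sub>\<subseteq> C" and all: "\<forall>Q\<in>C. integral_ideal Q \<and> 1 \<notin> tclos Q"
    for C :: "'a fract set set"
  proof
    assume "1 \<in> tclos (\<Union>C)"
    then obtain F where F: "finite F" "F \<subseteq> \<Union>C" "1 \<in> vop (fgen F)"
      unfolding mem_tclos_iff by blast
    then obtain Q where "Q \<in> C" "F \<subseteq> Q"
      using finite_subset_Union_chain[OF F(1,2) ne] ch unfolding chain_subset_alt_def by blast
    then show False using F all unfolding mem_tclos_iff by blast
  qed
  moreover have "integral_ideal D" "1 \<notin> tclos D" using assms unfolding t_proper_def by auto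
  ultimately obtain M where M: "D \<subseteq> M" "integral_ideal M" "1 \<notin> tclos M"
    and maximal: "\<And>Q. integral_ideal Q \<Longrightarrow> 1 \<notin> tclos Q \<Longrightarrow> M \<subseteq> Q \<Longrightarrow> Q = M"
    using integral_ideal_Zorn[of D "\<lambda>Q. 1 \<notin> tclos Q"] by blast
  then have "t_proper M" unfolding t_proper_def by blast
  moreover have "prime_ideal M"
    using prime_ideal_if_maximal_t_proper[OF \<open>t_proper M\<close>] maximal unfolding t_proper_def by blast
  ultimately show thesis using that M(1) by blast
qed

section \<open>Products, localization and the \<open>w\<close>-operation\<close>

lemma mem_iprod_iff:
  "z \<in> iprod A B \<longleftrightarrow> (\<exists>(n::nat) f g. z = (\<Sum>i<n. f i * g i) \<and> (\<forall>i<n. f i \<in> A \<and> g i \<in> B))"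
  unfolding iprod_def by auto

lemma iprod_0: "0 \<in> iprod A B"
  unfolding iprod_def by (intro CollectI exI[of _ 0]) auto

lemma iprod_add_mult:
  assumes z: "z \<in> iprod A B" and a: "a \<in> A" and b: "b \<in> B"
  shows "z + a * b \<in> iprod A B"
proof -
  obtain n :: nat and f g where z: "z = (\<Sum>i<n. f i * g i)" "\<forall>i<n. f i \<in> A \<and> g i \<in> B"
    using assms unfolding mem_iprod_iff by blast
  have "(\<Sum>i<n. (f(n:=a)) i * (g(n:=b)) i) = (\<Sum>i<n. f i * g i)"
    by (rule sum.cong) auto
  then have "z + a * b = (\<Sum>i<Suc n. (f(n:=a)) i * (g(n:=b)) i)"
    using z by simp
  moreover have "\<forall>i<Suc n. (f(n:=a)) i \<in> A \<and> (g(n:=b)) i \<in> B"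
    using z a b by (auto simp: less_Suc_eq)
  ultimately show ?thesis unfolding mem_iprod_iff by blast
qed

lemma mult_mem_iprod: "a \<in> A \<Longrightarrow> b \<in> B \<Longrightarrow> a * b \<in> iprod A B"
  using iprod_add_mult[OF iprod_0] by (metis add_0)

lemma iprod_least:
  assumes "0 \<in> S" "\<And>u v. u \<in> S \<Longrightarrow> v \<in> S \<Longrightarrow> u + v \<in> S"
    and "\<And>a b. a \<in> A \<Longrightarrow> b \<in> B \<Longrightarrow> a * b \<in> S"
  shows "iprod A B \<subseteq> S"
proof
  fix z assume "z \<in> iprod A B"
  then obtain n :: nat and f g where "z = (\<Sum>i<n. f i * g i)" "\<forall>i<n. f i \<in> A \<and> g i \<in> B"
    unfolding mem_iprod_iff by blast
  moreover have "(\<forall>i<n. f i \<in> A \<and> g i \<in> B) \<longrightarrow> (\<Sum>i<n. f i * g i) \<in> S"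
    by (induct n) (auto simp: assms)
  ultimately show "z \<in> S" by simp
qed

lemma submodule_iprod:
  assumes A: "submodule A"
  shows "submodule (iprod A B)"
proof (rule submoduleI)
  have "iprod A B \<subseteq> {v. \<forall>u\<in>iprod A B. u + v \<in> iprod A B}"
    by (rule iprod_least) (auto simp: add.assoc[symmetric] intro: iprod_add_mult)
  then have add: "u + v \<in> iprod A B" if "u \<in> iprod A B" "v \<in> iprod A B" for u v
    using that by blast
  then show "\<And>u v. u \<in> iprod A B \<Longrightarrow> v \<in> iprod A B \<Longrightarrow> u + v \<in> iprod A B" .
  show "0 \<in> iprod A B" by (rule iprod_0)
  fix r z :: "'a fract" assume r: "r \<in> Rs" and "z \<in> iprod A B"
  have "iprod A B \<subseteq> {z. r * z \<in> iprod A B}"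
    by (rule iprod_least)
      (auto simp: distrib_left iprod_0 add mult.assoc[symmetric]
        intro!: mult_mem_iprod submodule_mult_left[OF A r])
  then show "r * z \<in> iprod A B" using \<open>z \<in> iprod A B\<close> by blast
qed

lemma iprod_mono: "A \<subseteq> A' \<Longrightarrow> B \<subseteq> B' \<Longrightarrow> iprod A B \<subseteq> iprod A' B'"
  unfolding iprod_def by blast

lemma integral_ideal_iprod: "integral_ideal A \<Longrightarrow> B \<subseteq> Rs \<Longrightarrow> integral_ideal (iprod A B)"
  unfolding integral_ideal_iff_submodule
  using submodule_iprod[of A B] iprod_least[of Rs A B] by (auto intro!: Rs_mult)

lemma iprod_Rs: "integral_ideal A \<Longrightarrow> iprod A Rs = A"
proof
  assume "integral_ideal A"
  then have A: "submodule A" unfolding integral_ideal_iff_submodule by auto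
  show "iprod A Rs \<subseteq> A"
    by (rule iprod_least) (auto intro: submodule_0[OF A] submodule_add[OF A] submodule_mult_right[OF A])
  show "A \<subseteq> iprod A Rs" using mult_mem_iprod[of _ A 1 Rs] by auto
qed

definition localize :: "'a::idom fract set \<Rightarrow> 'a fract set \<Rightarrow> 'a fract set" where
  "localize M A = {z. \<exists>h\<in>Rs. h \<notin> M \<and> h * z \<in> A}"

lemma localize_mono: "A \<subseteq> B \<Longrightarrow> localize M A \<subseteq> localize M B"
  unfolding localize_def by blast

lemma subset_localize: "1 \<notin> M \<Longrightarrow> A \<subseteq> localize M A"
  unfolding localize_def by force

lemma localize_localize:
  assumes "prime_ideal M"
  shows "localize M (localize M A) \<subseteq> localize M A"
proof
  fix z assume "z \<in> localize M (localize M A)"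
  then obtain h g where "h \<in> Rs" "h \<notin> M" "g \<in> Rs" "g \<notin> M" "g * (h * z) \<in> A"
    unfolding localize_def by blast
  then show "z \<in> localize M A"
    unfolding localize_def using prime_ideal_mult_notin[OF assms]
    by (intro CollectI bexI[of _ "g * h"]) (auto simp: mult.assoc)
qed

lemma submodule_localize:
  assumes M: "prime_ideal M" and A: "submodule A"
  shows "submodule (localize M A)"
proof (rule submoduleI)
  show "0 \<in> localize M A"
    unfolding localize_def using prime_ideal_one_notin[OF M] submodule_0[OF A]
    by (intro CollectI bexI[of _ 1]) auto
next
  fix u v assume "u \<in> localize M A" "v \<in> localize M A"
  then obtain h g where h: "h \<in> Rs" "h \<notin> M" "h * u \<in> A" and g: "g \<in> Rs" "g \<notin> M" "g * v \<in> A"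
    unfolding localize_def by blast
  have "(h * g) * (u + v) = g * (h * u) + h * (g * v)" by (simp add: algebra_simps)
  also have "\<dots> \<in> A"
    by (rule submodule_add[OF A submodule_mult_left[OF A g(1) h(3)] submodule_mult_left[OF A h(1) g(3)]])
  finally show "u + v \<in> localize M A"
    unfolding localize_def using prime_ideal_mult_notin[OF M h(1) g(1) h(2) g(2)] Rs_mult[OF h(1) g(1)]
    by blast
next
  fix r u :: "'a fract" assume r: "r \<in> Rs" and "u \<in> localize M A"
  then obtain h where h: "h \<in> Rs" "h \<notin> M" "h * u \<in> A"
    unfolding localize_def by blast
  then have "h * (r * u) \<in> A"
    using submodule_mult_left[OF A r h(3)] by (simp add: mult.left_commute)
  then show "r * u \<in> localize M A"
    unfolding localize_def using h(1,2) by blast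
qed

lemma wop_mono: "A \<subseteq> B \<Longrightarrow> wop A \<subseteq> wop B"
  unfolding wop_def colon_def by blast

lemma subset_wop:
  assumes "submodule A"
  shows "A \<subseteq> wop A"
proof
  fix z assume "z \<in> A"
  have "fgen {1} \<subseteq> Rs" by (rule fgen_least) auto
  with \<open>z \<in> A\<close> have "z \<in> colon A (fgen {1})"
    unfolding colon_def using submodule_mult_right[OF assms] by blast
  moreover have "vop (fgen {1}) = Rs"
    using vop_fgen_superset[of "{1}"] by (intro vop_fgen_eq_Rs) auto
  moreover have "finite {1}" "{1} \<subseteq> Rs" by auto
  ultimately show "z \<in> wop A" unfolding wop_def by blast
qed

lemma wop_subset_Rs: "A \<subseteq> Rs \<Longrightarrow> wop A \<subseteq> Rs"
proof
  fix z assume "A \<subseteq> Rs" "z \<in> wop A"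
  then obtain G where G: "finite G" "vop (fgen G) = Rs" and "z \<in> colon A (fgen G)"
    unfolding wop_def by blast
  then have "\<forall>g\<in>G. z * g \<in> Rs"
    using fgen_superset[OF G(1)] \<open>A \<subseteq> Rs\<close> unfolding colon_def by blast
  moreover have "1 \<in> vop (fgen G)" using G(2) by simp
  then have "(\<forall>g\<in>G. z * g \<in> Rs) \<longrightarrow> z * 1 \<in> Rs"
    unfolding mem_vop_fgen_iff[OF G(1)] by (rule spec)
  ultimately show "z \<in> Rs" by simp
qed

lemma wop_subset_localize:
  assumes "t_proper M"
  shows "wop A \<subseteq> localize M A"
proof
  fix z assume "z \<in> wop A"
  then obtain G where G: "finite G" "G \<subseteq> Rs" "vop (fgen G) = Rs" and "z \<in> colon A (fgen G)"
    unfolding wop_def by blast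
  then have zG: "\<forall>g\<in>G. g * z \<in> A"
    using fgen_superset[OF G(1)] unfolding colon_def by (auto simp: mult.commute)
  obtain g where "g \<in> G" "g \<notin> M"
    using t_proper_not_subset[OF assms G(1)] G(3) by auto
  then show "z \<in> localize M A"
    unfolding localize_def using G(2) zG by blast
qed

text \<open>With \<open>wop_subset_localize\<close>: \<open>A\<^sub>w\<close> is the intersection of the \<open>A R\<^sub>M\<close> over the
  prime \<open>t\<close>-ideals \<open>M\<close>.\<close>

lemma mem_wopI_localize:
  assumes A: "submodule A"
    and local: "\<And>M. prime_ideal M \<Longrightarrow> t_proper M \<Longrightarrow> z \<in> localize M A"
  shows "z \<in> wop A"
proof -
  define D where "D = {d \<in> Rs. d * z \<in> A}"
  have "submodule D"
    unfolding D_def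
    by (rule submoduleI)
      (auto simp: distrib_right mult.assoc intro: submodule_0[OF A] submodule_add[OF A] submodule_mult_left[OF A])
  then have D: "integral_ideal D"
    unfolding integral_ideal_iff_submodule D_def by blast
  show ?thesis
  proof (cases "1 \<in> tclos D")
    case True
    then obtain F where F: "finite F" "F \<subseteq> D" "1 \<in> vop (fgen F)"
      unfolding mem_tclos_iff by blast
    have "F \<subseteq> Rs" using F(2) unfolding D_def by blast
    then have "vop (fgen F) = Rs" using vop_fgen_eq_Rs F by blast
    moreover have "submodule {e. z * e \<in> A}"
      by (rule submoduleI)
        (auto simp: distrib_left mult.left_commute intro: submodule_0[OF A] submodule_add[OF A] submodule_mult_left[OF A])
    then have "z \<in> colon A (fgen F)"
      using fgen_least[of "{e. z * e \<in> A}" F] F(2) unfolding D_def colon_def by (auto simp: mult.commute)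
    ultimately show ?thesis unfolding wop_def using F(1) \<open>F \<subseteq> Rs\<close> by blast
  next
    case False
    then obtain M where M: "D \<subseteq> M" "t_proper M" "prime_ideal M"
      using D t_proper_extend_prime unfolding t_proper_def by blast
    then obtain h where "h \<in> Rs" "h \<notin> M" "h * z \<in> A"
      using local unfolding localize_def by blast
    then show ?thesis using M(1) unfolding D_def by blast
  qed
qed

section \<open>Minimal primes over principal ideals\<close>

lemma minimal_prime_over_power_multiple:
  assumes min: "minimal_prime_over P A" and A: "integral_ideal A" and p: "p \<in> P"
  shows "\<exists>s n. s \<in> Rs \<and> s \<notin> P \<and> s * p ^ n \<in> A"
proof (rule ccontr)
  assume none: "\<not> ?thesis"
  have P: "prime_ideal P" and minimal: "\<And>Q. prime_ideal Q \<Longrightarrow> A \<subseteq> Q \<Longrightarrow> Q \<subseteq> P \<Longrightarrow> Q = P"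
    using min unfolding minimal_prime_over_def by auto
  define S where "S = {s * p ^ n | s n. s \<in> Rs \<and> s \<notin> P}"
  have in_S: "s * p ^ n \<in> S" if "s \<in> Rs" "s \<notin> P" for s n
    using that unfolding S_def by blast
  have "A \<inter> S = {}" using none unfolding S_def by blast
  then obtain M where M: "A \<subseteq> M" "integral_ideal M" "M \<inter> S = {}"
    and maximal: "\<And>Q. integral_ideal Q \<Longrightarrow> Q \<inter> S = {} \<Longrightarrow> M \<subseteq> Q \<Longrightarrow> Q = M"
    using integral_ideal_Zorn[of A "\<lambda>Q. Q \<inter> S = {}"] A by blast
  have "s * t \<in> S" if st: "s \<in> S" "t \<in> S" for s t
  proof -
    obtain s1 n1 s2 n2 where "s = s1 * p ^ n1" "t = s2 * p ^ n2"
      and "s1 \<in> Rs" "s1 \<notin> P" "s2 \<in> Rs" "s2 \<notin> P"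
      using st unfolding S_def by blast
    then show ?thesis
      using in_S[of "s1 * s2" "n1 + n2"] prime_ideal_mult_notin[OF P]
      by (auto simp: power_add ac_simps)
  qed
  moreover have "1 \<in> S" using in_S[of 1 0] prime_ideal_one_notin[OF P] by simp
  ultimately have "prime_ideal M"
    using prime_ideal_if_maximal_disjoint M(2,3) maximal by blast
  moreover have "M \<subseteq> P"
  proof
    fix m assume "m \<in> M"
    with M(2,3) in_S[of m 0] show "m \<in> P"
      unfolding integral_ideal_iff_submodule by auto
  qed
  ultimately have "M = P" using minimal M(1) by blast
  moreover have "p \<in> S" using in_S[of 1 1] prime_ideal_one_notin[OF P] by simp
  ultimately show False using M(3) p by blast
qed

lemma mem_pideal_iff: "w \<in> pideal x \<longleftrightarrow> (\<exists>r\<in>Rs. w = emb x * r)"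
  unfolding pideal_def by auto

lemma emb_mem_pideal: "emb x \<in> pideal x"
  unfolding mem_pideal_iff by (intro bexI[of _ 1]) auto

lemma integral_ideal_pideal: "integral_ideal (pideal x)"
  unfolding integral_ideal_iff_submodule
proof
  show "pideal x \<subseteq> Rs" unfolding subset_iff mem_pideal_iff by auto
  show "submodule (pideal x)"
  proof (rule submoduleI)
    show "0 \<in> pideal x" unfolding mem_pideal_iff by (intro bexI[of _ 0]) auto
  next
    fix a b assume "a \<in> pideal x" "b \<in> pideal x"
    then obtain r r' where "r \<in> Rs" "r' \<in> Rs" "a = emb x * r" "b = emb x * r'"
      unfolding mem_pideal_iff by blast
    then show "a + b \<in> pideal x"
      unfolding mem_pideal_iff by (intro bexI[of _ "r + r'"]) (auto simp: distrib_left)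
  next
    fix c a :: "'a fract" assume "c \<in> Rs" "a \<in> pideal x"
    then obtain r where "r \<in> Rs" "a = emb x * r" unfolding mem_pideal_iff by blast
    with \<open>c \<in> Rs\<close> show "c * a \<in> pideal x"
      unfolding mem_pideal_iff by (intro bexI[of _ "c * r"]) (auto simp: ac_simps)
  qed
qed

lemma submodule_pideal: "submodule (pideal x)"
  using integral_ideal_pideal unfolding integral_ideal_iff_submodule by blast

lemma vop_fgen_subset_pideal:
  assumes x: "x \<noteq> 0" and G: "finite G" "G \<subseteq> pideal x"
  shows "vop (fgen G) \<subseteq> pideal x"
proof
  fix y assume y: "y \<in> vop (fgen G)"
  let ?c = "inverse (emb x)"
  have "\<forall>g\<in>G. ?c * g \<in> Rs"
  proof
    fix g assume "g \<in> G"
    with G(2) have "g \<in> pideal x" by blast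
    then obtain r where r: "r \<in> Rs" "g = emb x * r"
      unfolding mem_pideal_iff by blast
    have "?c * g = r" using x r(2) by (simp add: field_simps)
    then show "?c * g \<in> Rs" using r(1) by simp
  qed
  then have "?c * y \<in> Rs" using y unfolding mem_vop_fgen_iff[OF G(1)] by blast
  moreover have "y = emb x * (?c * y)" using x by (simp add: mult.assoc[symmetric])
  ultimately show "y \<in> pideal x" unfolding mem_pideal_iff by (intro bexI[of _ "?c * y"])
qed

lemma card_image_insert_Diff_less:
  assumes "finite G" "g \<notin> G" "g \<notin> A" "f h \<in> A" "\<And>a. a \<in> A \<Longrightarrow> f a \<in> A"
  shows "card (f ` insert h G - A) < card (insert g G - A)"
proof -
  have "f ` insert h G - A \<subseteq> f ` (G - A)" using assms(4,5) by auto
  then have "card (f ` insert h G - A) \<le> card (G - A)"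
    using assms(1) by (meson card_image_le card_mono finite_Diff finite_imageI le_trans)
  also have "\<dots> < card (insert g G - A)" using assms(1-3) by (simp add: insert_Diff_if)
  finally show ?thesis .
qed

text \<open>A generator \<open>g \<in> P - xR\<close> with \<open>s g\<^sup>n \<in> xR\<close> is replaced by \<open>s g\<^sup>n\<^sup>+\<^sup>1 \<in> xR\<close>,
  at the price of passing from \<open>y\<close> to \<open>s y\<^sup>n\<^sup>+\<^sup>1\<close>.\<close>

lemma minimal_prime_over_pideal_exchange:
  assumes min: "minimal_prime_over P (pideal x)"
    and G: "finite G" "G \<subseteq> P" and g: "g \<in> G" "g \<notin> pideal x" and y: "y \<in> vop (fgen G)"
  obtains s m H where "s \<in> Rs" "s \<notin> P" "finite H" "H \<subseteq> P"
    "card (H - pideal x) < card (G - pideal x)" "s * y ^ m \<in> vop (fgen H)"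
proof -
  have P: "prime_ideal P" using min unfolding minimal_prime_over_def by blast
  note PR = prime_ideal_subset_Rs[OF P] and Pm = prime_ideal_submodule[OF P]
  define G' where "G' = G - {g}"
  have G': "finite G'" "G' \<subseteq> Rs" "G' \<subseteq> P" "G = insert g G'" "g \<notin> G'"
    using G g PR unfolding G'_def by auto
  have gP: "g \<in> P" and gR: "g \<in> Rs" using g G PR by auto
  obtain s n where s: "s \<in> Rs" "s \<notin> P" "s * g ^ n \<in> pideal x"
    using minimal_prime_over_power_multiple[OF min integral_ideal_pideal gP] by blast
  have sg: "s * g ^ Suc n \<in> pideal x"
    using submodule_mult_right[OF submodule_pideal gR s(3)] by (simp add: ac_simps)
  define H where "H = (*) s ` insert (g ^ Suc n) G'"
  have "y ^ Suc n \<in> vop (fgen (insert (g ^ Suc n) G'))"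
    using vop_fgen_insert_power[OF G'(1,2) gR] y G'(4) by simp
  then have yH: "s * y ^ Suc n \<in> vop (fgen H)"
    unfolding H_def using G'(1) by (intro vop_fgen_scale) auto
  have "g ^ Suc n \<in> P"
    using submodule_mult_left[OF Pm Rs_power[OF gR] gP] by (simp add: ac_simps)
  then have H: "finite H" "H \<subseteq> P"
    unfolding H_def using G'(1,3) submodule_mult_left[OF Pm s(1)] by auto
  have card: "card (H - pideal x) < card (G - pideal x)"
    unfolding H_def G'(4) using G'(1,5) g(2) sg submodule_mult_left[OF submodule_pideal s(1)]
    by (intro card_image_insert_Diff_less) auto
  show thesis using that[OF s(1,2) H card yH] .
qed

lemma vop_fgen_minimal_prime_power_multiple:
  assumes min: "minimal_prime_over P (pideal x)" and x: "x \<noteq> 0"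
    and "finite G" "G \<subseteq> P" "y \<in> vop (fgen G)"
  shows "\<exists>s n. s \<in> Rs \<and> s \<notin> P \<and> s * y ^ n \<in> pideal x"
  using assms(3-5)
proof (induction "card (G - pideal x)" arbitrary: G y rule: less_induct)
  case less
  have P: "prime_ideal P" using min unfolding minimal_prime_over_def by blast
  show ?case
  proof (cases "G \<subseteq> pideal x")
    case True
    then have "y \<in> pideal x"
      using vop_fgen_subset_pideal[OF x less.prems(1)] less.prems(3) by blast
    then show ?thesis
      using prime_ideal_one_notin[OF P] by (intro exI[of _ 1] exI[of _ 1]) simp
  next
    case False
    then obtain g where g: "g \<in> G" "g \<notin> pideal x" by blast
    obtain s m H where s: "s \<in> Rs" "s \<notin> P" and H: "finite H" "H \<subseteq> P"
      and card: "card (H - pideal x) < card (G - pideal x)" and yH: "s * y ^ m \<in> vop (fgen H)"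
      by (rule minimal_prime_over_pideal_exchange[OF min less.prems(1,2) g less.prems(3)])
    obtain s' n where s': "s' \<in> Rs" "s' \<notin> P" "s' * (s * y ^ m) ^ n \<in> pideal x"
      using less.hyps[OF card H yH] by blast
    have "s' * (s * y ^ m) ^ n = (s' * s ^ n) * y ^ (m * n)"
      by (simp only: power_mult_distrib power_mult[symmetric] mult.assoc)
    with s'(3) have "(s' * s ^ n) * y ^ (m * n) \<in> pideal x" by (simp only:)
    moreover have "s' * s ^ n \<in> Rs" using s'(1) s(1) by auto
    moreover have "s' * s ^ n \<notin> P"
      using prime_ideal_mult_notin[OF P s'(1) Rs_power[OF s(1)] s'(2) prime_ideal_power_notin[OF P s]] .
    ultimately show ?thesis by blast
  qed
qed

lemma tclos_minimal_prime_over_pideal: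
  assumes min: "minimal_prime_over P (pideal x)" and x: "x \<noteq> 0"
  shows "tclos P = P"
proof
  have P: "prime_ideal P" and xP: "pideal x \<subseteq> P"
    using min unfolding minimal_prime_over_def by auto
  show "tclos P \<subseteq> P"
  proof
    fix y assume "y \<in> tclos P"
    then obtain G where G: "finite G" "G \<subseteq> P" "y \<in> vop (fgen G)"
      unfolding mem_tclos_iff by blast
    then obtain s n where s: "s \<in> Rs" "s \<notin> P" "s * y ^ n \<in> pideal x"
      using vop_fgen_minimal_prime_power_multiple[OF min x] by blast
    have y: "y \<in> Rs"
      using vop_fgen_subset_Rs[OF G(1)] G(2,3) prime_ideal_subset_Rs[OF P] by blast
    then have "y ^ n \<in> P" using prime_idealD[OF P s(1)] s xP by blast
    then show "y \<in> P" using prime_ideal_power_notin[OF P y] by blast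
  qed
qed (rule tclos_superset)

lemma t_proper_minimal_prime_over_pideal:
  assumes "minimal_prime_over P (pideal x)" "x \<noteq> 0"
  shows "t_proper P"
proof -
  have P: "prime_ideal P" using assms(1) unfolding minimal_prime_over_def by blast
  show ?thesis
    unfolding t_proper_def tclos_minimal_prime_over_pideal[OF assms]
    using prime_ideal_integral_ideal[OF P] prime_ideal_one_notin[OF P] by blast
qed

section \<open>The PvMD condition and the localization \<open>R\<^sub>P\<close>\<close>

text \<open>In \<open>R\<^sub>M\<close>, a valuation domain, one of \<open>a, b\<close> divides the other; globally this
  reads as follows.\<close>

lemma PvMD_common_multiplier:
  assumes PvMD: "PvMD TYPE('a::idom)" and a: "(a :: 'a fract) \<in> Rs" and b: "b \<in> Rs"
    and nonzero: "a \<noteq> 0" and N: "t_proper N"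
  obtains f where "a * f \<in> Rs" "b * f \<in> Rs" "a * f \<notin> N \<or> b * f \<notin> N"
proof -
  let ?F = "{a, b}"
  have F: "finite ?F" "?F \<subseteq> Rs" using a b by auto
  have "fgen ?F \<noteq> {0}" using fgen_superset[OF F(1)] nonzero by blast
  then have T: "tclos (iprod (fgen ?F) (finv (fgen ?F))) = Rs"
    using PvMD F unfolding PvMD_def by blast
  have Nm: "submodule N" using N unfolding t_proper_def integral_ideal_iff_submodule by blast
  have "\<exists>f. a * f \<in> Rs \<and> b * f \<in> Rs \<and> (a * f \<notin> N \<or> b * f \<notin> N)"
  proof (rule ccontr)
    assume none: "\<not> ?thesis"
    have "iprod (fgen ?F) (finv (fgen ?F)) \<subseteq> N"
    proof (rule iprod_least)
      fix e f assume e: "e \<in> fgen ?F" and f: "f \<in> finv (fgen ?F)"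
      have "submodule {e. e * f \<in> N}"
        by (rule submoduleI) (auto simp: distrib_right mult.assoc intro: submodule_0[OF Nm]
            submodule_add[OF Nm] submodule_mult_left[OF Nm])
      moreover have "a * f \<in> Rs" "b * f \<in> Rs"
        using f mem_finv_fgen_iff[OF F(1)] by (auto simp: mult.commute)
      then have "?F \<subseteq> {e. e * f \<in> N}" using none by blast
      ultimately show "e * f \<in> N" using fgen_least e by blast
    qed (use Nm in \<open>auto intro: submodule_0 submodule_add\<close>)
    then have "Rs \<subseteq> tclos N" using tclos_mono T by metis
    then have "1 \<in> tclos N" using Rs_1 by blast
    then show False using N unfolding t_proper_def by blast
  qed
  then show thesis using that by blast
qed

lemma mem_localization_iff:
  "l \<in> localization P \<longleftrightarrow> (\<exists>a s. l = a / s \<and> a \<in> Rs \<and> s \<in> Rs \<and> s \<notin> P)"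
  unfolding localization_def by blast

lemma Rs_subset_localization:
  assumes "prime_ideal P"
  shows "Rs \<subseteq> localization P"
proof
  fix r :: "'a fract" assume "r \<in> Rs"
  then show "r \<in> localization P"
    unfolding mem_localization_iff using prime_ideal_one_notin[OF assms]
    by (intro exI[of _ r] exI[of _ 1]) simp
qed

lemma localization_mult:
  assumes P: "prime_ideal P" and "l \<in> localization P" "l' \<in> localization P"
  shows "l * l' \<in> localization P"
proof -
  obtain a s b t where h: "l = a / s" "a \<in> Rs" "s \<in> Rs" "s \<notin> P"
    "l' = b / t" "b \<in> Rs" "t \<in> Rs" "t \<notin> P"
    using assms(2,3) unfolding mem_localization_iff by blast
  have "l * l' = (a * b) / (s * t)" using h(1,5) by simp
  moreover have "s * t \<notin> P" using prime_ideal_mult_notin[OF P h(3,7,4,8)] .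
  ultimately show ?thesis
    unfolding mem_localization_iff using h by (intro exI[of _ "a * b"] exI[of _ "s * t"]) auto
qed

lemma localization_add:
  assumes P: "prime_ideal P" and "l \<in> localization P" "l' \<in> localization P"
  shows "l + l' \<in> localization P"
proof -
  obtain a s b t where h: "l = a / s" "a \<in> Rs" "s \<in> Rs" "s \<notin> P"
    "l' = b / t" "b \<in> Rs" "t \<in> Rs" "t \<notin> P"
    using assms(2,3) unfolding mem_localization_iff by blast
  have "s \<noteq> 0" "t \<noteq> 0" using h(4,8) prime_ideal_nonzero[OF P] by auto
  then have "l + l' = (a * t + b * s) / (s * t)" using h(1,5) by (simp add: field_simps)
  moreover have "s * t \<notin> P" using prime_ideal_mult_notin[OF P h(3,7,4,8)] .
  ultimately show ?thesis
    unfolding mem_localization_iff using h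
    by (intro exI[of _ "a * t + b * s"] exI[of _ "s * t"]) auto
qed

lemma localization_divide:
  assumes P: "prime_ideal P" and "l \<in> localization P" and s: "s \<in> Rs" "s \<notin> P"
  shows "l / s \<in> localization P"
proof -
  obtain a t where h: "l = a / t" "a \<in> Rs" "t \<in> Rs" "t \<notin> P"
    using assms(2) unfolding mem_localization_iff by blast
  have "l / s = a / (t * s)" using h(1) by simp
  moreover have "t * s \<notin> P" using prime_ideal_mult_notin[OF P h(3) s(1) h(4) s(2)] .
  ultimately show ?thesis
    unfolding mem_localization_iff using h s by (intro exI[of _ a] exI[of _ "t * s"]) auto
qed

lemma mem_iadd_iff: "w \<in> iadd A B \<longleftrightarrow> (\<exists>a\<in>A. \<exists>b\<in>B. w = a + b)"
  unfolding iadd_def by blast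

lemma subset_iadd_left: "0 \<in> B \<Longrightarrow> A \<subseteq> iadd A B"
  unfolding mem_iadd_iff subset_iff by force

lemma subset_iadd_right: "0 \<in> A \<Longrightarrow> B \<subseteq> iadd A B"
  unfolding mem_iadd_iff subset_iff by force

lemma iadd_subset: "submodule S \<Longrightarrow> A \<subseteq> S \<Longrightarrow> B \<subseteq> S \<Longrightarrow> iadd A B \<subseteq> S"
  unfolding mem_iadd_iff subset_iff by (auto intro: submodule_add)

lemma integral_ideal_iadd:
  assumes A: "integral_ideal A" and B: "integral_ideal B"
  shows "integral_ideal (iadd A B)"
proof -
  have Am: "submodule A" "A \<subseteq> Rs" and Bm: "submodule B" "B \<subseteq> Rs"
    using A B unfolding integral_ideal_iff_submodule by auto
  have "submodule (iadd A B)"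
  proof (rule submoduleI)
    show "0 \<in> iadd A B"
      using subset_iadd_left[OF submodule_0[OF Bm(1)]] submodule_0[OF Am(1)] by blast
  next
    fix u v assume "u \<in> iadd A B" "v \<in> iadd A B"
    then obtain a b a' b' where h: "u = a + b" "v = a' + b'" "a \<in> A" "b \<in> B" "a' \<in> A" "b' \<in> B"
      unfolding mem_iadd_iff by blast
    then have "u + v = (a + a') + (b + b')" by (simp add: ac_simps)
    then show "u + v \<in> iadd A B"
      unfolding mem_iadd_iff using submodule_add[OF Am(1)] submodule_add[OF Bm(1)] h by blast
  next
    fix r u :: "'a fract" assume r: "r \<in> Rs" and "u \<in> iadd A B"
    then obtain a b where h: "u = a + b" "a \<in> A" "b \<in> B"
      unfolding mem_iadd_iff by blast
    then have "r * u = r * a + r * b" by (simp add: algebra_simps)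
    then show "r * u \<in> iadd A B"
      unfolding mem_iadd_iff using submodule_mult_left[OF Am(1) r] submodule_mult_left[OF Bm(1) r] h
      by blast
  qed
  moreover have "iadd A B \<subseteq> Rs" by (rule iadd_subset) (use Am Bm in auto)
  ultimately show ?thesis unfolding integral_ideal_iff_submodule by blast
qed

section \<open>The ideal \<open>I = xR\<^sub>P \<inter> R\<close>\<close>

locale min_prime_over_principal =
  fixes x :: "'a::idom" and P :: "'a fract set"
  assumes x_nonzero: "x \<noteq> 0" and min_prime: "minimal_prime_over P (pideal x)"
begin

abbreviation I :: "'a fract set" where
  "I \<equiv> ((\<lambda>y. emb x * y) ` localization P) \<inter> Rs"

abbreviation J :: "'a fract set" where
  "J \<equiv> iadd (pideal x) (ipow I 2)"

lemma prime_P: "prime_ideal P"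
  using min_prime unfolding minimal_prime_over_def by blast

lemma pideal_subset_P: "pideal x \<subseteq> P"
  using min_prime unfolding minimal_prime_over_def by blast

lemma t_proper_P: "t_proper P"
  by (rule t_proper_minimal_prime_over_pideal[OF min_prime x_nonzero])

lemma mem_I_iff: "y \<in> I \<longleftrightarrow> y \<in> Rs \<and> (\<exists>l\<in>localization P. y = emb x * l)"
  by blast

lemma integral_ideal_I: "integral_ideal I"
  unfolding integral_ideal_iff_submodule
proof
  show "I \<subseteq> Rs" by blast
  show "submodule I"
  proof (rule submoduleI)
    show "0 \<in> I"
      unfolding mem_I_iff using Rs_subset_localization[OF prime_P] by (intro conjI Rs_0 bexI[of _ 0]) auto
  next
    fix a b assume "a \<in> I" "b \<in> I"
    then obtain l l' where "a \<in> Rs" "b \<in> Rs" "l \<in> localization P" "l' \<in> localization P"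
      "a = emb x * l" "b = emb x * l'"
      unfolding mem_I_iff by blast
    then show "a + b \<in> I"
      unfolding mem_I_iff using localization_add[OF prime_P]
      by (intro conjI Rs_add bexI[of _ "l + l'"]) (auto simp: distrib_left)
  next
    fix r a :: "'a fract" assume r: "r \<in> Rs" and "a \<in> I"
    then obtain l where "a \<in> Rs" "l \<in> localization P" "a = emb x * l"
      unfolding mem_I_iff by blast
    with r show "r * a \<in> I"
      unfolding mem_I_iff using localization_mult[OF prime_P] Rs_subset_localization[OF prime_P]
      by (intro conjI Rs_mult bexI[of _ "r * l"]) (auto simp: ac_simps)
  qed
qed

lemma submodule_I: "submodule I"
  using integral_ideal_I unfolding integral_ideal_iff_submodule by blast

lemma emb_x_mem_I: "emb x \<in> I"
  unfolding mem_I_iff using Rs_subset_localization[OF prime_P] by (intro conjI emb_Rs bexI[of _ 1]) auto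

lemma pideal_subset_I: "pideal x \<subseteq> I"
  unfolding subset_iff mem_pideal_iff using submodule_mult_right[OF submodule_I _ emb_x_mem_I] by blast

lemma I_subset_P: "I \<subseteq> P"
proof
  fix y assume "y \<in> I"
  then obtain l where y: "y \<in> Rs" "l \<in> localization P" "y = emb x * l"
    unfolding mem_I_iff by blast
  then obtain a s where h: "l = a / s" "a \<in> Rs" "s \<in> Rs" "s \<notin> P"
    unfolding mem_localization_iff by blast
  have "y * s = emb x * a" using y(3) h(1) prime_ideal_nonzero[OF prime_P h(4)] by simp
  moreover have "emb x * a \<in> P"
    using pideal_subset_P h(2) unfolding subset_iff mem_pideal_iff by blast
  ultimately show "y \<in> P" using prime_idealD[OF prime_P y(1) h(3)] h(4) by auto
qed

lemma mem_I_if_mult_mem: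
  assumes w: "w \<in> Rs" and s: "s \<in> Rs" "s \<notin> P" and ws: "w * s \<in> I"
  shows "w \<in> I"
proof -
  obtain l where l: "l \<in> localization P" "w * s = emb x * l"
    using ws unfolding mem_I_iff by blast
  have "w = emb x * (l / s)"
    using l(2) prime_ideal_nonzero[OF prime_P s(2)] by (simp add: field_simps)
  moreover have "l / s \<in> localization P" by (rule localization_divide[OF prime_P l(1) s])
  ultimately show "w \<in> I" unfolding mem_I_iff using w by blast
qed

lemma wop_I: "wop I = I"
proof
  show "I \<subseteq> wop I" by (rule subset_wop[OF submodule_I])
  show "wop I \<subseteq> I"
  proof
    fix z assume z: "z \<in> wop I"
    then have "z \<in> Rs" using wop_subset_Rs[OF Int_lower2] by blast
    moreover obtain h where "h \<in> Rs" "h \<notin> P" "h * z \<in> I"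
      using wop_subset_localize[OF t_proper_P] z unfolding localize_def by blast
    ultimately show "z \<in> I" using mem_I_if_mult_mem by (simp add: mult.commute)
  qed
qed

lemma ipow_I_2: "ipow I 2 = iprod I I"
  by (simp add: numeral_2_eq_2 iprod_Rs[OF integral_ideal_I])

lemma iprod_I_I_subset_I: "iprod I I \<subseteq> I"
proof (rule iprod_least)
  show "0 \<in> I" by (rule submodule_0[OF submodule_I])
  show "\<And>u v. u \<in> I \<Longrightarrow> v \<in> I \<Longrightarrow> u + v \<in> I" by (rule submodule_add[OF submodule_I])
  fix a b assume "a \<in> I" "b \<in> I"
  then show "a * b \<in> I" using submodule_mult_right[OF submodule_I, of b a] by blast
qed

lemma integral_ideal_J: "integral_ideal J"
  unfolding ipow_I_2
  by (intro integral_ideal_iadd integral_ideal_pideal integral_ideal_iprod integral_ideal_I) blast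

lemma submodule_J: "submodule J"
  using integral_ideal_J unfolding integral_ideal_iff_submodule by blast

lemma emb_x_mem_J: "emb x \<in> J"
  using subset_iadd_left[OF iprod_0] emb_mem_pideal unfolding ipow_I_2 by blast

lemma iprod_I_I_subset_J: "iprod I I \<subseteq> J"
  unfolding ipow_I_2 by (rule subset_iadd_right[OF submodule_0[OF submodule_pideal]])

lemma J_subset_I: "J \<subseteq> I"
  unfolding ipow_I_2
  by (rule iadd_subset[OF submodule_I pideal_subset_I iprod_I_I_subset_I])

end

locale PvMD_min_prime_over_principal = min_prime_over_principal +
  assumes PvMD: "PvMD TYPE('a)"
begin

text \<open>At a \<open>t\<close>-ideal \<open>M \<supseteq> P\<close> one has \<open>I\<^sup>2 R\<^sub>M = x I R\<^sub>M\<close>.\<close>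

lemma mult_I_local:
  assumes M: "t_proper M" "P \<subseteq> M" and y: "y \<in> I" and z: "z \<in> I"
  shows "\<exists>g\<in>Rs. g \<notin> M \<and> g * (y * z) \<in> (*) (emb x) ` I"
proof -
  obtain l where l: "l \<in> localization P" "z = emb x * l"
    using z unfolding mem_I_iff by blast
  then obtain b t where bt: "l = b / t" "b \<in> Rs" "t \<in> Rs" "t \<notin> P"
    unfolding mem_localization_iff by blast
  have t: "t \<noteq> 0" using prime_ideal_nonzero[OF prime_P bt(4)] .
  have yR: "y \<in> Rs" and yP: "y \<in> P" using y I_subset_P by auto
  obtain f where f: "t * f \<in> Rs" "(y * b) * f \<in> Rs" "t * f \<notin> M \<or> (y * b) * f \<notin> M"
    using PvMD_common_multiplier[OF PvMD bt(3) Rs_mult[OF yR bt(2)] t M(1)] .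
  have eq: "t * ((y * b) * f) = y * (b * (t * f))" by (simp add: ac_simps)
  have "y * (b * (t * f)) \<in> P"
    using submodule_mult_right[OF prime_ideal_submodule[OF prime_P] Rs_mult[OF bt(2) f(1)] yP] .
  then have ybf: "(y * b) * f \<in> P"
    using prime_idealD[OF prime_P bt(3) f(2)] bt(4) eq by auto
  have "y * (b * (t * f)) \<in> I"
    using submodule_mult_right[OF submodule_I Rs_mult[OF bt(2) f(1)] y] .
  then have "(y * b) * f \<in> I"
    using mem_I_if_mult_mem[OF f(2) bt(3,4)] eq by (simp add: ac_simps)
  moreover have "(t * f) * (y * z) = emb x * ((y * b) * f)"
    using l(2) bt(1) t by (simp add: field_simps)
  moreover have "t * f \<notin> M" using f(3) ybf M(2) by blast
  ultimately show ?thesis using f(1) by blast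
qed

lemma iprod_I_I_subset_localize:
  assumes M: "prime_ideal M" "t_proper M"
  shows "iprod I I \<subseteq> localize M (iprod J I)"
proof (rule iprod_least)
  have L: "submodule (localize M (iprod J I))"
    by (rule submodule_localize[OF M(1) submodule_iprod[OF submodule_J]])
  show "0 \<in> localize M (iprod J I)" by (rule submodule_0[OF L])
  show "\<And>u v. u \<in> localize M (iprod J I) \<Longrightarrow> v \<in> localize M (iprod J I)
    \<Longrightarrow> u + v \<in> localize M (iprod J I)"
    by (rule submodule_add[OF L])
  fix y z assume y: "y \<in> I" and z: "z \<in> I"
  show "y * z \<in> localize M (iprod J I)"
  proof (cases "P \<subseteq> M")
    case True
    then obtain g w where g: "g \<in> Rs" "g \<notin> M" "w \<in> I" "g * (y * z) = emb x * w"
      using mult_I_local[OF M(2) _ y z] by blast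
    then have "g * (y * z) \<in> iprod J I" using mult_mem_iprod[OF emb_x_mem_J g(3)] by simp
    then show ?thesis unfolding localize_def using g(1,2) by blast
  next
    case False
    then obtain p where p: "p \<in> P" "p \<notin> M" by blast
    have pR: "p \<in> Rs" using p(1) prime_ideal_subset_Rs[OF prime_P] by blast
    obtain s n where s: "s \<in> Rs" "s \<notin> P" "s * p ^ n \<in> pideal x"
      using minimal_prime_over_power_multiple[OF min_prime integral_ideal_pideal p(1)] by blast
    have pnR: "p ^ n \<in> Rs" using Rs_power[OF pR] .
    have "s * p ^ n \<in> I" using pideal_subset_I s(3) by (rule subsetD)
    then have "p ^ n * s \<in> I" by (simp only: mult.commute)
    then have "p ^ n \<in> I" by (rule mem_I_if_mult_mem[OF pnR s(1,2)])
    then have "p ^ n * p ^ n \<in> J" using iprod_I_I_subset_J mult_mem_iprod[of _ I _ I] by auto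
    moreover have "y * z \<in> I"
      using submodule_mult_right[OF submodule_I _ y] z by blast
    ultimately have "(p ^ n * p ^ n) * (y * z) \<in> iprod J I" by (rule mult_mem_iprod)
    moreover have "p ^ n * p ^ n \<notin> M"
      using prime_ideal_mult_notin[OF M(1) pnR pnR] prime_ideal_power_notin[OF M(1) pR p(2)] by blast
    moreover have "p ^ n * p ^ n \<in> Rs" using pnR by blast
    ultimately show ?thesis unfolding localize_def by blast
  qed
qed

lemma w_reduction_J: "w_reduction J I"
proof -
  have "wop (iprod J I) \<subseteq> wop (iprod I I)"
    by (rule wop_mono[OF iprod_mono[OF J_subset_I order_refl]])
  moreover have "wop (iprod I I) \<subseteq> wop (iprod J I)"
  proof
    fix z assume z: "z \<in> wop (iprod I I)"
    show "z \<in> wop (iprod J I)"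
    proof (rule mem_wopI_localize[OF submodule_iprod[OF submodule_J]])
      fix M :: "'a fract set" assume M: "prime_ideal M" "t_proper M"
      have "z \<in> localize M (iprod I I)" using wop_subset_localize[OF M(2)] z by (rule subsetD)
      also have "\<dots> \<subseteq> localize M (localize M (iprod J I))"
        by (rule localize_mono[OF iprod_I_I_subset_localize[OF M]])
      also have "\<dots> \<subseteq> localize M (iprod J I)" by (rule localize_localize[OF M(1)])
      finally show "z \<in> localize M (iprod J I)" .
    qed
  qed
  ultimately have "wop (iprod J (ipow I 1)) = wop (ipow I (Suc 1))"
    using iprod_Rs[OF integral_ideal_I] ipow_I_2 by (simp add: numeral_2_eq_2)
  with integral_ideal_J J_subset_I show ?thesis unfolding w_reduction_def by blast
qed

lemma J_subset_localize_pideal: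
  assumes M: "prime_ideal M" "t_proper M" "P \<subseteq> M"
  shows "J \<subseteq> localize M (pideal x)"
  unfolding ipow_I_2
proof (rule iadd_subset)
  have L: "submodule (localize M (pideal x))"
    by (rule submodule_localize[OF M(1) submodule_pideal])
  then show "submodule (localize M (pideal x))" .
  show "pideal x \<subseteq> localize M (pideal x)"
    by (rule subset_localize[OF prime_ideal_one_notin[OF M(1)]])
  show "iprod I I \<subseteq> localize M (pideal x)"
  proof (rule iprod_least)
    show "0 \<in> localize M (pideal x)" by (rule submodule_0[OF L])
    show "\<And>u v. u \<in> localize M (pideal x) \<Longrightarrow> v \<in> localize M (pideal x)
      \<Longrightarrow> u + v \<in> localize M (pideal x)"
      by (rule submodule_add[OF L])
    fix y z assume y: "y \<in> I" and z: "z \<in> I"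
    obtain g w where g: "g \<in> Rs" "g \<notin> M" "w \<in> I" "g * (y * z) = emb x * w"
      using mult_I_local[OF M(2,3) y z] by blast
    have "w \<in> Rs" using g(3) by (rule IntD2)
    then have "g * (y * z) \<in> pideal x" unfolding g(4) mem_pideal_iff by blast
    then show "y * z \<in> localize M (pideal x)"
      unfolding localize_def using g(1,2) by blast
  qed
qed

lemma I_subset_localize_pideal:
  assumes "w_basic I" "prime_ideal M" "t_proper M" "P \<subseteq> M"
  shows "I \<subseteq> localize M (pideal x)"
proof -
  have "wop J = wop I" using assms(1) w_reduction_J unfolding w_basic_def by blast
  then have "I = wop J" using wop_I by simp
  also have "\<dots> \<subseteq> localize M J" by (rule wop_subset_localize[OF assms(3)])
  also have "\<dots> \<subseteq> localize M (localize M (pideal x))"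
    by (rule localize_mono[OF J_subset_localize_pideal[OF assms(2-4)]])
  also have "\<dots> \<subseteq> localize M (pideal x)" by (rule localize_localize[OF assms(2)])
  finally show ?thesis .
qed

text \<open>A \<open>t\<close>-prime \<open>M\<close> properly above \<open>P\<close> would contain some \<open>s \<notin> P\<close>; the common
  multiplier \<open>f\<close> of \<open>s\<close> and \<open>x\<close> at \<open>M\<close> then gives \<open>xf \<in> I\<close> but \<open>xf \<notin> x R\<^sub>M\<close>.\<close>

lemma max_t_ideal_P_if_w_basic:
  assumes "w_basic I"
  shows "max_t_ideal P"
proof (rule ccontr)
  assume "\<not> max_t_ideal P"
  moreover have "integral_ideal P" "P \<noteq> Rs" "tclos P = P"
    using prime_P tclos_minimal_prime_over_pideal[OF min_prime x_nonzero]
    unfolding prime_ideal_def by auto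
  ultimately obtain Q where Q: "integral_ideal Q" "Q \<noteq> Rs" "tclos Q = Q" "P \<subseteq> Q" "Q \<noteq> P"
    unfolding max_t_ideal_def by blast
  then have "t_proper Q" using integral_ideal_one_notin unfolding t_proper_def by simp
  then obtain M where M: "Q \<subseteq> M" "t_proper M" "prime_ideal M" by (rule t_proper_extend_prime)
  obtain s where s: "s \<in> Q" "s \<notin> P" using Q(4,5) by blast
  have sR: "s \<in> Rs" using s(1) Q(1) unfolding integral_ideal_iff_submodule by blast
  obtain f where f: "s * f \<in> Rs" "emb x * f \<in> Rs" "s * f \<notin> M \<or> emb x * f \<notin> M"
    using PvMD_common_multiplier[OF PvMD sR emb_Rs prime_ideal_nonzero[OF prime_P s(2)] M(2)] .
  have "emb x * (s * f) \<in> pideal x" unfolding mem_pideal_iff using f(1) by blast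
  then have xfs: "(emb x * f) * s \<in> pideal x" by (simp add: ac_simps)
  then have "emb x * f \<in> P"
    using prime_idealD[OF prime_P f(2) sR] pideal_subset_P s(2) by blast
  then have sf: "s * f \<notin> M" using f(3) Q(4) M(1) by blast
  have "(emb x * f) * s \<in> I" using pideal_subset_I xfs by (rule subsetD)
  then have "emb x * f \<in> I" by (rule mem_I_if_mult_mem[OF f(2) sR s(2)])
  then obtain h r where h: "h \<in> Rs" "h \<notin> M" "r \<in> Rs" "h * (emb x * f) = emb x * r"
    using I_subset_localize_pideal[OF assms M(3,2)] Q(4) M(1)
    unfolding localize_def mem_pideal_iff by blast
  then have "h * f = r" using x_nonzero by (simp add: ac_simps)
  then have "h * (s * f) = r * s" by (simp add: ac_simps)
  moreover have "r * s \<in> M"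
    using submodule_mult_left[OF prime_ideal_submodule[OF M(3)] h(3)] s(1) M(1) by blast
  moreover have "h * (s * f) \<notin> M" using prime_ideal_mult_notin[OF M(3) h(1) f(1) h(2) sf] .
  ultimately show False by metis
qed

end

theorem lemma2p3:
  fixes x :: "'a::idom" and P :: "'a fract set"
  assumes "PvMD TYPE('a)"
    and "x \<noteq> 0"
    and "minimal_prime_over P (pideal x)"
  defines "I \<equiv> ((\<lambda>y. emb x * y) ` localization P) \<inter> Rs"
  shows "wop I = I \<and> w_reduction (iadd (pideal x) (ipow I 2)) I
         \<and> (w_basic I \<longrightarrow> max_t_ideal P)"
proof -
  interpret PvMD_min_prime_over_principal x P
    using assms(1-3) by unfold_locales
  show ?thesis unfolding I_def using wop_I w_reduction_J max_t_ideal_P_if_w_basic by blast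
qed

end
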